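(* Let $n\ge1$, $N=2n+1$, and let $(a_j)_{j\ge0}$ be complex numbers with $|a_j|\le (j+2)^{-2}$ for all $j\ge 0$. Let $f(z)=-\sum_{j=0}^\infty a_jz^j$, let $z_1,\dots,z_N$ be the roots of $P_n(f;z)$ (with multiplicity) and $\lambda_k:=z_k^{-1}$. Then \[S_{j+1}(\lambda)-a_j=0,\qquad j=0,\dots,n-1,\] \[|S_{j+1}(\lambda)-a_j|\le\frac{r^{n-j}}{1-r^{n+1}}\left(15n+\frac{30}{1-r}\right),\qquad j\ge n,\] where $r\in(0,1)$ is arbitrary.
   Context: For $f$ analytic in the unit disc, $s_n(z)=s_n(f;z)$ denotes the $n$-th Taylor polynomial of $\exp\left(\int_0^z f(\zeta)\,d\zeta\right)$ (so $s_n(0)=1$), and $P_n(f;z):=s_n(z)+z^{2n+1}\overline{s}_n(1/z)$, where $\overline{s}_n$ is the polynomial with complex-conjugated coefficients; it has degree $2n+1$ and $P_n(0)=1$. For $\lambda_1,\dots,\lambda_N$, $S_\nu(\lambda)=\lambda_1^\nu+\dots+\lambda_N^\nu$. *)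

theory Defs
  imports "HOL-Complex_Analysis.Complex_Analysis" "HOL-Computational_Algebra.Polynomial"
begin

definition fser :: "(nat \<Rightarrow> complex) \<Rightarrow> complex \<Rightarrow> complex" where
  "fser a z = - (\<Sum>j. a j * z ^ j)"

definition expint :: "(complex \<Rightarrow> complex) \<Rightarrow> complex \<Rightarrow> complex" where
  "expint f z = exp (contour_integral (linepath 0 z) f)"

definition tcoeff :: "(complex \<Rightarrow> complex) \<Rightarrow> nat \<Rightarrow> complex" where
  "tcoeff f k = (deriv ^^ k) (expint f) 0 / of_nat (fact k)"

definition s_poly :: "(complex \<Rightarrow> complex) \<Rightarrow> nat \<Rightarrow> complex poly" where
  "s_poly f n = (\<Sum>k\<le>n. monom (tcoeff f k) k)"

text \<open>P_n(f;z) = s_n(z) + z^(2n+1) conj(s_n)(1/z).\<close>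
definition P_poly :: "(complex \<Rightarrow> complex) \<Rightarrow> nat \<Rightarrow> complex poly" where
  "P_poly f n = s_poly f n + (\<Sum>k\<le>n. monom (cnj (tcoeff f k)) (2 * n + 1 - k))"

definition Spow :: "complex list \<Rightarrow> nat \<Rightarrow> complex" where
  "Spow zs \<nu> = (\<Sum>z\<leftarrow>zs. (1 / z) ^ \<nu>)"

end

theory Submission
  imports Defs
begin

(* Let c_k be the Taylor coefficients of E = exp (int_0^z f), so that s_n is the n-th partial sum
   of E. From E' = f E they satisfy (k+1) c_(k+1) = - sum_(i<=k) a_i c_(k-i), and the decay
   |a_j| <= (j+2)^-2 then gives sum_(k=1..n) |c_k| <= 11/16, so s_n has no zeros in the closed unit
   disc. On the unit circle z^n conj(s_n)(1/z) has the same modulus as s_n, hence by the maximum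
   modulus principle the second summand of P_n is strictly smaller than s_n inside the disc; as
   P_n(z) = z^(2n+1) conj(P_n(1/conj z)), all roots of P_n lie on the unit circle.
   In particular P_n'/P_n = - sum_nu S_(nu+1)(lambda) z^nu. Since P_n agrees with E up to order n
   and E'/E = f, comparing coefficients gives S_(j+1)(lambda) = a_j for j < n. For j >= n the
   claimed bound is weaker than the trivial estimate |S_(j+1)(lambda) - a_j| <= 2n + 2, because
   |lambda_k| = 1 and r^(n-j) >= 1. *)

unbundle no vec_syntax

section \<open>Taylor coefficients of the exponential of a primitive\<close>

lemma tcoeff_0 [simp]: "tcoeff f 0 = 1"
  by (simp add: tcoeff_def expint_def)

lemma expint_has_field_derivative:
  fixes f :: "complex \<Rightarrow> complex"
  assumes holf: "f holomorphic_on ball 0 r" and x: "x \<in> ball 0 r"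
  shows "(expint f has_field_derivative f x * expint f x) (at x)"
proof -
  obtain g where g: "\<And>x. x \<in> ball 0 r \<Longrightarrow> (g has_field_derivative f x) (at x within ball 0 r)"
    using holomorphic_convex_primitive'[OF convex_ball open_ball holf] by blast
  have expint_eq: "expint f z = exp (g z - g 0)" if "z \<in> ball 0 r" for z
  proof -
    have "closed_segment 0 z \<subseteq> ball 0 r"
      using that by (intro closed_segment_subset) (auto intro: le_less_trans[OF norm_ge_zero])
    then have "path_image (linepath 0 z) \<subseteq> ball 0 r"
      by simp
    from contour_integral_primitive[OF g valid_path_linepath this]
    show ?thesis
      by (simp add: expint_def contour_integral_unique)
  qed
  have "((\<lambda>z. exp (g z - g 0)) has_field_derivative f x * exp (g x - g 0)) (at x)"
    using g[OF x] at_within_open[OF x open_ball] by (auto intro!: derivative_eq_intros)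
  then show ?thesis
    using expint_eq x
    by (auto intro: has_field_derivative_transform_within_open[OF _ open_ball x])
qed

lemma fps_deriv_tcoeff:
  fixes f :: "complex \<Rightarrow> complex"
  assumes holf: "f holomorphic_on ball 0 r" and "0 < r" and F: "f has_fps_expansion F"
  shows "fps_deriv (Abs_fps (tcoeff f)) = F * Abs_fps (tcoeff f)"
proof -
  let ?E = "Abs_fps (tcoeff f)"
  note deriv = expint_has_field_derivative[OF holf]
  have "expint f holomorphic_on ball 0 r"
    using deriv by (metis holomorphic_on_open open_ball)
  then have "expint f has_fps_expansion fps_expansion (expint f) 0"
    using \<open>0 < r\<close> by (intro has_fps_expansion_fps_expansion) auto
  moreover have "fps_expansion (expint f) 0 = ?E"
    by (simp add: fps_expansion_def fps_eq_iff tcoeff_def)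
  ultimately have E: "expint f has_fps_expansion ?E"
    by simp
  have "eventually (\<lambda>x. x \<in> ball 0 r) (nhds 0)"
    using \<open>0 < r\<close> by (intro eventually_nhds_in_open) auto
  then have "eventually (\<lambda>x. f x * expint f x = deriv (expint f) x) (nhds 0)"
    by eventually_elim (simp add: DERIV_imp_deriv[OF deriv])
  then have "deriv (expint f) has_fps_expansion F * ?E"
    using has_fps_expansion_mult[OF F E] by (simp add: has_fps_expansion_cong)
  with has_fps_expansion_deriv[OF E] show ?thesis
    by (rule fps_expansion_unique_complex)
qed

lemma fps_conv_radius_ge_1:
  fixes a :: "nat \<Rightarrow> complex"
  assumes "summable (\<lambda>j. norm (a j))"
  shows "1 \<le> fps_conv_radius (Abs_fps a)"
  using conv_radius_geI[of a 1] summable_norm_cancel[OF assms]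
  by (simp add: fps_conv_radius_def one_ereal_def)

lemma fser_eq_eval_fps: "fser a = (\<lambda>z. - eval_fps (Abs_fps a) z)"
  by (simp add: fun_eq_iff fser_def eval_fps_def)

lemma fser_has_fps_expansion:
  assumes "summable (\<lambda>j. norm (a j))"
  shows "fser a has_fps_expansion - Abs_fps a"
proof -
  have "eval_fps (Abs_fps a) has_fps_expansion Abs_fps a"
    using fps_conv_radius_ge_1[OF assms]
    by (intro eval_fps_has_fps_expansion) (meson ereal_0_less_1 order_less_le_trans)
  from has_fps_expansion_minus[OF this] show ?thesis
    by (simp add: fser_eq_eval_fps)
qed

lemma fser_holomorphic_on_ball:
  assumes "summable (\<lambda>j. norm (a j))"
  shows "fser a holomorphic_on ball 0 1"
proof -
  have "ball 0 1 \<subseteq> eball 0 (fps_conv_radius (Abs_fps a))"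
    using eball_mono[OF fps_conv_radius_ge_1[OF assms]] by (simp add: one_ereal_def)
  then have "eval_fps (Abs_fps a) holomorphic_on ball 0 1"
    by (rule holomorphic_on_eval_fps)
  then show ?thesis
    by (simp add: fser_eq_eval_fps holomorphic_on_minus)
qed

lemma summable_inverse_square_shift: "summable (\<lambda>j. 1 / (real j + 2)^2)"
proof (rule summable_comparison_test'[where N = 1])
  show "summable (\<lambda>j. inverse (real j ^ 2))"
    by (rule inverse_power_summable) simp
  fix j :: nat
  assume "j \<ge> 1"
  then show "norm (1 / (real j + 2)^2) \<le> inverse (real j ^ 2)"
    by (simp add: divide_simps power_mono)
qed

lemma fps_deriv_tcoeff_fser:
  assumes "\<And>j. norm (a j) \<le> 1 / (real j + 2)^2"
  shows "fps_deriv (Abs_fps (tcoeff (fser a))) = - Abs_fps a * Abs_fps (tcoeff (fser a))"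
proof -
  have "summable (\<lambda>j. norm (a j))"
    using assms by (intro summable_comparison_test'[OF summable_inverse_square_shift]) auto
  then show ?thesis
    using fps_deriv_tcoeff fser_holomorphic_on_ball fser_has_fps_expansion zero_less_one by blast
qed

section \<open>Coefficient estimates\<close>

lemma sum_inverse_square_shift_le: "(\<Sum>i<m. 1 / (real i + 2)^2) \<le> 2/3"
proof -
  have "(\<Sum>i<m. 1 / (real i + 2)^2) \<le> 2/3 - 1 / (real m + 3/2)" for m
  proof (induction m)
    case (Suc m)
    have "(real m + 3/2) * (real m + 5/2) \<le> (real m + 2)^2"
      by (simp add: power2_eq_square algebra_simps)
    then have "1 / (real m + 2)^2 \<le> 1 / ((real m + 3/2) * (real m + 5/2))"
      by (intro divide_left_mono) auto
    also have "\<dots> = 1 / (real m + 3/2) - 1 / (real (Suc m) + 3/2)"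
      by (simp add: field_simps)
    finally show ?case
      using Suc by simp
  qed simp
  then show ?thesis
    by (smt (verit) divide_pos_pos of_nat_0_le_iff)
qed

lemma sum_weighted_norm_coeffs_le:
  fixes A E :: "complex fps"
  assumes "fps_deriv E = A * E"
  shows "(\<Sum>k\<in>{1..n}. real k * norm (E $ k))
           \<le> (\<Sum>i<n. norm (A $ i)) * (\<Sum>j<n. norm (E $ j))"
proof -
  have coeff_bound:
    "real (Suc k) * norm (E $ Suc k) \<le> (\<Sum>i\<le>k. norm (A $ i) * norm (E $ (k - i)))" for k
  proof -
    have "real (Suc k) * norm (E $ Suc k) = norm ((A * E) $ k)"
      by (simp flip: assms add: fps_deriv_nth norm_mult del: of_nat_Suc)
    also have "\<dots> \<le> (\<Sum>i\<le>k. norm (A $ i * E $ (k - i)))"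
      unfolding fps_mult_nth atLeast0AtMost by (rule norm_sum)
    finally show ?thesis
      by (simp add: norm_mult)
  qed
  have "(\<Sum>k\<in>{1..n}. real k * norm (E $ k)) = (\<Sum>k<n. real (Suc k) * norm (E $ Suc k))"
    by (rule sum_bounds_lt_plus1[symmetric])
  also have "\<dots> \<le> (\<Sum>k<n. \<Sum>i\<le>k. norm (A $ i) * norm (E $ (k - i)))"
    by (intro sum_mono coeff_bound)
  also have "\<dots> = (\<Sum>(i, j) \<in> {(i, j). i + j < n}. norm (A $ i) * norm (E $ j))"
    by (rule sum.triangle_reindex[symmetric])
  also have "\<dots> \<le> (\<Sum>(i, j) \<in> {..<n} \<times> {..<n}. norm (A $ i) * norm (E $ j))"
    by (rule sum_mono2) auto
  also have "\<dots> = (\<Sum>i<n. norm (A $ i)) * (\<Sum>j<n. norm (E $ j))"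
    by (simp add: sum_product sum.cartesian_product)
  finally show ?thesis .
qed

lemma sum_norm_coeffs_le_11_16:
  fixes A E :: "complex fps"
  assumes E0: "E $ 0 = 1" and dE: "fps_deriv E = A * E"
    and A: "\<And>j. norm (A $ j) \<le> 1 / (real j + 2)^2"
  shows "(\<Sum>k\<in>{1..n}. norm (E $ k)) \<le> 11/16"
proof (cases "n = 0")
  case False
  define U where "U = (\<Sum>k\<in>{1..n}. norm (E $ k))"
  have split: "(\<Sum>k\<in>{1..n}. g k) = g 1 + (\<Sum>k\<in>{2..n}. g k)" for g :: "nat \<Rightarrow> real"
    using False by (simp add: sum.atLeast_Suc_atMost numeral_2_eq_2)
  have E1: "norm (E $ 1) \<le> 1/4"
    using arg_cong[OF dE, of "\<lambda>F. F $ 0"] A[of 0] E0 by (simp add: fps_mult_nth)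
  have "(\<Sum>k\<in>{2..n}. 2 * norm (E $ k)) \<le> (\<Sum>k\<in>{2..n}. real k * norm (E $ k))"
    by (rule sum_mono) (auto intro: mult_right_mono)
  then have "2 * U - norm (E $ 1) \<le> (\<Sum>k\<in>{1..n}. real k * norm (E $ k))"
    using split[of "\<lambda>k. real k * norm (E $ k)"] split[of "\<lambda>k. norm (E $ k)"]
    by (simp add: U_def sum_distrib_left)
  also have "\<dots> \<le> (\<Sum>i<n. norm (A $ i)) * (\<Sum>j<n. norm (E $ j))"
    by (rule sum_weighted_norm_coeffs_le[OF dE])
  also have "\<dots> \<le> 2/3 * (1 + U)"
  proof (rule mult_mono)
    show "(\<Sum>i<n. norm (A $ i)) \<le> 2/3"
      using sum_mono[of "{..<n}" "\<lambda>i. norm (A $ i)", OF A] sum_inverse_square_shift_le[of n]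
      by linarith
    have "(\<Sum>j<n. norm (E $ j)) \<le> (\<Sum>j\<le>n. norm (E $ j))"
      by (rule sum_mono2) auto
    also have "\<dots> = 1 + U"
      using E0 by (simp add: U_def atMost_atLeast0 sum.atLeast_Suc_atMost)
    finally show "(\<Sum>j<n. norm (E $ j)) \<le> 1 + U" .
  qed (auto intro: sum_nonneg)
  finally show ?thesis
    using E1 by (simp add: U_def)
qed simp

lemma sum_nonzero_in_cball:
  fixes c :: "nat \<Rightarrow> complex"
  assumes "c 0 = 1" and "(\<Sum>k\<in>{1..n}. norm (c k)) < 1" and "norm z \<le> 1"
  shows "(\<Sum>k\<le>n. c k * z^k) \<noteq> 0"
proof -
  have "norm (\<Sum>k\<in>{1..n}. c k * z^k) \<le> (\<Sum>k\<in>{1..n}. norm (c k * z^k))"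
    by (rule norm_sum)
  also have "\<dots> \<le> (\<Sum>k\<in>{1..n}. norm (c k))"
    using \<open>norm z \<le> 1\<close>
    by (intro sum_mono) (simp add: norm_mult norm_power mult_left_le power_le_one)
  finally have "norm (\<Sum>k\<in>{1..n}. c k * z^k) < 1"
    using assms(2) by linarith
  moreover have "(\<Sum>k\<le>n. c k * z^k) = 1 + (\<Sum>k\<in>{1..n}. c k * z^k)"
    using \<open>c 0 = 1\<close> by (simp add: atMost_atLeast0 sum.atLeast_Suc_atMost)
  ultimately show ?thesis
    by (metis add_eq_0_iff norm_minus_cancel norm_one order_less_irrefl)
qed

section \<open>Self-inversive polynomials\<close>

lemma reversed_sum_on_circle:
  fixes c :: "nat \<Rightarrow> complex"
  assumes "norm y = 1"
  shows "(\<Sum>k\<le>n. cnj (c k) * y^(n-k)) = y^n * cnj (\<Sum>k\<le>n. c k * y^k)"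
proof -
  have "y * cnj y = 1"
    using assms by (simp add: complex_norm_square[symmetric] power2_eq_square)
  have "y^(n-k) = y^n * cnj y ^ k" if "k \<le> n" for k
  proof -
    have "y^n * cnj y ^ k = y^(n-k) * (y * cnj y)^k"
      using that by (simp add: power_mult_distrib power_add[symmetric])
    with \<open>y * cnj y = 1\<close> show ?thesis
      by simp
  qed
  then show ?thesis
    by (simp add: sum_distrib_left mult_ac)
qed

lemma norm_reflected_sum_lt:
  fixes c :: "nat \<Rightarrow> complex"
  assumes nz: "\<And>z. norm z \<le> 1 \<Longrightarrow> (\<Sum>k\<le>n. c k * z^k) \<noteq> 0" and w: "norm w < 1"
  shows "norm (\<Sum>k\<le>n. cnj (c k) * w^(2*n+1-k)) < norm (\<Sum>k\<le>n. c k * w^k)"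
proof -
  define s where "s z = (\<Sum>k\<le>n. c k * z^k)" for z
  define t where "t z = (\<Sum>k\<le>n. cnj (c k) * z^(n-k))" for z
  have s_nz: "s z \<noteq> 0" if "z \<in> cball 0 1" for z
    using nz that by (simp add: s_def)
  have quotient_le: "norm (t z / s z) \<le> 1" if "z \<in> cball 0 1" for z
  proof (rule maximum_modulus_frontier[where f = "\<lambda>z. t z / s z"])
    show "(\<lambda>z. t z / s z) holomorphic_on interior (cball 0 1)"
      using s_nz unfolding s_def t_def by (auto intro!: holomorphic_intros)
    show "continuous_on (closure (cball 0 1)) (\<lambda>z. t z / s z)"
      using s_nz unfolding s_def t_def by (auto intro!: continuous_intros)
    fix y :: complex
    assume "y \<in> frontier (cball 0 1)"
    then have "norm y = 1"
      by simp
    have "t y = y^n * cnj (s y)"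
      unfolding s_def t_def by (rule reversed_sum_on_circle[OF \<open>norm y = 1\<close>])
    then have "norm (t y) = norm (s y)"
      by (simp add: norm_mult norm_power \<open>norm y = 1\<close>)
    then show "norm (t y / s y) \<le> 1"
      by (simp add: norm_divide)
  qed (use that in auto)
  have "(\<Sum>k\<le>n. cnj (c k) * w^(2*n+1-k)) = w^(n+1) * t w"
  proof -
    have "w^(2*n+1-k) = w^(n+1) * w^(n-k)" if "k \<le> n" for k
    proof -
      have "2*n+1-k = (n+1) + (n-k)"
        using that by simp
      then show ?thesis
        by (simp only: power_add)
    qed
    then show ?thesis
      by (simp add: t_def sum_distrib_left mult_ac)
  qed
  then have "norm (\<Sum>k\<le>n. cnj (c k) * w^(2*n+1-k)) = norm w ^ (n+1) * norm (t w)"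
    by (simp add: norm_mult norm_power)
  also have "\<dots> \<le> norm w ^ (n+1) * norm (s w)"
    using quotient_le[of w] s_nz[of w] w
    by (intro mult_left_mono) (auto simp: norm_divide divide_le_eq)
  also have "\<dots> < norm (s w)"
    using s_nz[of w] w power_less_one_iff[of "norm w" "n+1"] by simp
  finally show ?thesis
    by (simp add: s_def)
qed

lemma self_inversive_sum_reflect:
  fixes c :: "nat \<Rightarrow> complex"
  assumes "z \<noteq> 0"
  defines "w \<equiv> 1 / cnj z"
  shows "(\<Sum>k\<le>n. c k * z^k) + (\<Sum>k\<le>n. cnj (c k) * z^(2*n+1-k))
           = z^(2*n+1) * cnj ((\<Sum>k\<le>n. c k * w^k) + (\<Sum>k\<le>n. cnj (c k) * w^(2*n+1-k)))"
proof -
  let ?N = "2*n+1"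
  have pow: "z^?N * (1/z)^j = z^(?N-j)" if "j \<le> ?N" for j
  proof -
    have "z^?N = z^(?N-j) * z^j"
      using that by (metis le_add_diff_inverse2 power_add)
    then have "z^?N * (1/z)^j = z^(?N-j) * (z * (1/z))^j"
      by (simp only: power_mult_distrib mult.assoc)
    also have "\<dots> = z^(?N-j)"
      using \<open>z \<noteq> 0\<close> by simp
    finally show ?thesis .
  qed
  have "z^?N * (\<Sum>k\<le>n. cnj (c k) * (1/z)^k) = (\<Sum>k\<le>n. cnj (c k) * z^(?N-k))"
    unfolding sum_distrib_left
  proof (intro sum.cong refl)
    fix k
    assume "k \<in> {..n}"
    then show "z^?N * (cnj (c k) * (1/z)^k) = cnj (c k) * z^(?N-k)"
      using pow[of k] by (simp add: mult.left_commute)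
  qed
  moreover have "z^?N * (\<Sum>k\<le>n. c k * (1/z)^(?N-k)) = (\<Sum>k\<le>n. c k * z^k)"
    unfolding sum_distrib_left
  proof (intro sum.cong refl)
    fix k
    assume "k \<in> {..n}"
    then show "z^?N * (c k * (1/z)^(?N-k)) = c k * z^k"
      using pow[of "?N-k"] by (simp add: mult.left_commute)
  qed
  ultimately show ?thesis
    by (simp add: w_def algebra_simps)
qed

lemma self_inversive_root_on_circle:
  fixes c :: "nat \<Rightarrow> complex"
  assumes nz: "\<And>z. norm z \<le> 1 \<Longrightarrow> (\<Sum>k\<le>n. c k * z^k) \<noteq> 0"
    and root: "(\<Sum>k\<le>n. c k * z^k) + (\<Sum>k\<le>n. cnj (c k) * z^(2*n+1-k)) = 0"
  shows "norm z = 1"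
proof -
  have no_root_inside: "(\<Sum>k\<le>n. c k * w^k) + (\<Sum>k\<le>n. cnj (c k) * w^(2*n+1-k)) \<noteq> 0"
    if "norm w < 1" for w
    using norm_reflected_sum_lt[OF nz that] by (metis add_eq_0_iff norm_minus_cancel order_less_irrefl)
  show ?thesis
  proof (rule ccontr)
    assume "norm z \<noteq> 1"
    moreover have "\<not> norm z < 1"
      using no_root_inside root by blast
    ultimately have "1 < norm z"
      by linarith
    then have "norm (1 / cnj z) < 1" and "z \<noteq> 0"
      by (auto simp: norm_divide divide_less_eq)
    let ?X = "(\<Sum>k\<le>n. c k * (1 / cnj z)^k) + (\<Sum>k\<le>n. cnj (c k) * (1 / cnj z)^(2*n+1-k))"
    have "z^(2*n+1) * cnj ?X = 0"
      using trans[OF self_inversive_sum_reflect[OF \<open>z \<noteq> 0\<close>, symmetric] root] .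
    then have "?X = 0"
      using \<open>z \<noteq> 0\<close> by (simp only: mult_eq_0_iff power_eq_0_iff complex_cnj_zero_iff) simp
    with no_root_inside[OF \<open>norm (1 / cnj z) < 1\<close>] show False
      by contradiction
  qed
qed

lemma poly_P_poly:
  "poly (P_poly f n) z = (\<Sum>k\<le>n. tcoeff f k * z^k) + (\<Sum>k\<le>n. cnj (tcoeff f k) * z^(2*n+1-k))"
  by (simp add: P_poly_def s_poly_def poly_sum poly_monom)

lemma P_poly_fser_root_on_circle:
  assumes "\<And>j. norm (a j) \<le> 1 / (real j + 2)^2" and "poly (P_poly (fser a) n) z = 0"
  shows "norm z = 1"
proof -
  define c where "c = tcoeff (fser a)"
  have "(\<Sum>k\<in>{1..n}. norm (c k)) \<le> 11/16"
    using sum_norm_coeffs_le_11_16[OF _ fps_deriv_tcoeff_fser[OF assms(1)]] assms(1)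
    by (simp add: c_def)
  then have "\<And>z. norm z \<le> 1 \<Longrightarrow> (\<Sum>k\<le>n. c k * z^k) \<noteq> 0"
    by (intro sum_nonzero_in_cball) (auto simp: c_def)
  from self_inversive_root_on_circle[OF this] show ?thesis
    using assms(2) by (simp add: poly_P_poly c_def)
qed

section \<open>Power sums of the inverse roots\<close>

lemma poly_linear_factors_root:
  fixes zs :: "'a::comm_ring_1 list"
  assumes "z \<in> set zs"
  shows "poly (\<Prod>w\<leftarrow>zs. [:- w, 1:]) z = 0"
  using assms by (induction zs) auto

lemma fps_deriv_prod_linear_factors:
  fixes zs :: "'a::field list"
  assumes "0 \<notin> set zs"
  shows "fps_deriv (fps_of_poly (\<Prod>z\<leftarrow>zs. [:- z, 1:]))
           = - fps_of_poly (\<Prod>z\<leftarrow>zs. [:- z, 1:]) * Abs_fps (\<lambda>\<nu>. \<Sum>z\<leftarrow>zs. (1/z)^(\<nu>+1))"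
  using assms
proof (induction zs)
  case Nil
  then show ?case
    by (simp add: fps_eq_iff)
next
  case (Cons z zs)
  define Q where "Q = fps_of_poly (\<Prod>z\<leftarrow>zs. [:- z, 1:])"
  define S where "S = Abs_fps (\<lambda>\<nu>. \<Sum>z\<leftarrow>zs. (1/z)^(\<nu>+1))"
  define L where "L = fps_X - fps_const z"
  define R where "R = Abs_fps (\<lambda>\<nu>. (1/z)^(\<nu>+1))"
  have "z \<noteq> 0"
    using Cons.prems by auto
  have IH: "fps_deriv Q = - Q * S"
    using Cons by (simp add: Q_def S_def)
  have "L * R = -1"
  proof (rule fps_ext)
    fix m
    show "(L * R) $ m = (-1) $ m"
      using \<open>z \<noteq> 0\<close> by (cases m) (simp_all add: L_def R_def algebra_simps)
  qed
  have "fps_deriv L = 1"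
    by (simp add: L_def)
  then have "fps_deriv (L * Q) + L * Q * (R + S) = Q * (1 + L * R)"
    by (simp add: fps_deriv_mult IH algebra_simps)
  also have "\<dots> = 0"
    using \<open>L * R = -1\<close> by simp
  finally have "fps_deriv (L * Q) = - (L * Q) * (R + S)"
    by (simp add: add_eq_0_iff)
  moreover have "fps_of_poly (\<Prod>w\<leftarrow>z # zs. [:- w, 1:]) = L * Q"
    by (simp add: L_def Q_def fps_of_poly_mult fps_of_poly_pCons)
  moreover have "Abs_fps (\<lambda>\<nu>. \<Sum>w\<leftarrow>z # zs. (1/w)^(\<nu>+1)) = R + S"
    by (simp add: fps_eq_iff R_def S_def)
  ultimately show ?case
    by simp
qed

lemma fps_nth_eq_0_if_mult_nth_eq_0:
  fixes E D :: "'a::comm_ring_1 fps"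
  assumes E0: "E $ 0 = 1" and ED: "\<And>k. k < n \<Longrightarrow> (E * D) $ k = 0" and "k < n"
  shows "D $ k = 0"
  using \<open>k < n\<close>
proof (induction k rule: less_induct)
  case (less k)
  have "(E * D) $ k = D $ k + (\<Sum>i\<in>{1..k}. E $ i * D $ (k - i))"
    using E0 by (simp add: fps_mult_nth sum.atLeast_Suc_atMost)
  also have "(\<Sum>i\<in>{1..k}. E $ i * D $ (k - i)) = 0"
    using less by (intro sum.neutral) auto
  finally show ?case
    using ED[OF less.prems] by simp
qed

lemma power_sums_eq_log_deriv_coeffs:
  fixes zs :: "'a::field list" and p :: "'a poly" and A E :: "'a fps"
  assumes "0 \<notin> set zs" and p: "p = smult l (\<Prod>z\<leftarrow>zs. [:- z, 1:])"
    and E0: "E $ 0 = 1" and dE: "fps_deriv E = - A * E"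
    and pE: "\<And>k. k \<le> n \<Longrightarrow> coeff p k = E $ k" and "j < n"
  shows "(\<Sum>z\<leftarrow>zs. (1/z)^(j+1)) = A $ j"
proof -
  define S where "S = Abs_fps (\<lambda>\<nu>. \<Sum>z\<leftarrow>zs. (1/z)^(\<nu>+1))"
  define P where "P = fps_of_poly p"
  have dP: "fps_deriv P = - P * S"
    using fps_deriv_prod_linear_factors[OF assms(1)] by (simp add: P_def S_def p fps_of_poly_smult)
  have PE: "P $ i = E $ i" if "i \<le> n" for i
    using pE[OF that] by (simp add: P_def)
  have "(E * (S - A)) $ k = 0" if "k < n" for k
  proof -
    have "(E * S) $ k = (P * S) $ k"
      using PE that by (auto simp: fps_mult_nth intro!: sum.cong)
    also have "\<dots> = - fps_deriv P $ k"
      by (simp add: dP)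
    also have "\<dots> = - fps_deriv E $ k"
      using PE[of "Suc k"] that by (simp add: fps_deriv_nth)
    also have "\<dots> = (E * A) $ k"
      by (simp add: dE mult.commute)
    finally show ?thesis
      by (simp add: algebra_simps)
  qed
  then have "(S - A) $ j = 0"
    using fps_nth_eq_0_if_mult_nth_eq_0[OF E0] \<open>j < n\<close> by blast
  then show ?thesis
    by (simp add: S_def)
qed

lemma coeff_P_poly_low:
  assumes "k \<le> n"
  shows "coeff (P_poly f n) k = tcoeff f k"
  using assms by (auto simp: P_poly_def s_poly_def coeff_sum coeff_monom intro!: sum.neutral)

lemma norm_power_sum_unimodular_le:
  fixes zs :: "complex list"
  assumes "\<forall>z\<in>set zs. norm z = 1"
  shows "norm (\<Sum>z\<leftarrow>zs. (1/z)^m) \<le> length zs"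
  using assms
proof (induction zs)
  case (Cons z zs)
  have "norm ((1/z)^m) = 1"
    using Cons.prems by (simp add: norm_power norm_divide)
  with Cons show ?case
    by (simp add: norm_triangle_le)
qed simp

lemma error_bound_ge_15n_plus_30:
  fixes r :: real
  assumes "n \<le> j" and "0 < r" and "r < 1"
  shows "15 * real n + 30 \<le> r powr (real n - real j) / (1 - r ^ (n + 1)) * (15 * real n + 30 / (1 - r))"
proof -
  have "1 \<le> r powr (real n - real j)"
    using powr_mono'[of "real n - real j" 0 r] assms by simp
  moreover have "0 < 1 - r ^ (n + 1)" and "1 - r ^ (n + 1) \<le> 1"
    using assms power_less_one_iff[of r "n + 1"] by auto
  ultimately have factor: "1 \<le> r powr (real n - real j) / (1 - r ^ (n + 1))"
    by simp
  have "30 \<le> 30 / (1 - r)"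
    using assms by (simp add: divide_simps)
  then have "15 * real n + 30 \<le> 15 * real n + 30 / (1 - r)"
    by simp
  also have "\<dots> \<le> r powr (real n - real j) / (1 - r ^ (n + 1)) * (15 * real n + 30 / (1 - r))"
    using mult_right_mono[OF factor, of "15 * real n + 30 / (1 - r)"] assms by simp
  finally show ?thesis .
qed

theorem theorem1p2:
  fixes n :: nat and a :: "nat \<Rightarrow> complex" and zs :: "complex list"
  assumes "n \<ge> 1"
    and "\<And>j. norm (a j) \<le> 1 / (real j + 2) ^ 2"
    and "length zs = 2 * n + 1"
    and "P_poly (fser a) n = smult (lead_coeff (P_poly (fser a) n)) (\<Prod>z\<leftarrow>zs. [:- z, 1:])"
  shows "(\<forall>j<n. Spow zs (j + 1) - a j = 0) \<and>
         (\<forall>j\<ge>n. \<forall>r::real. 0 < r \<and> r < 1 \<longrightarrow>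
            norm (Spow zs (j + 1) - a j)
              \<le> r powr (real n - real j) / (1 - r ^ (n + 1)) * (15 * real n + 30 / (1 - r)))"
proof -
  have circle: "norm z = 1" if "z \<in> set zs" for z
    using P_poly_fser_root_on_circle[OF assms(2)] poly_linear_factors_root[OF that]
    by (metis assms(4) mult_zero_right poly_smult)
  have power_sums: "Spow zs (j + 1) = a j" if "j < n" for j
    using power_sums_eq_log_deriv_coeffs[OF _ assms(4) _ fps_deriv_tcoeff_fser[OF assms(2)] _ that]
      circle
    by (force simp: Spow_def coeff_P_poly_low)
  have bound: "norm (Spow zs (j + 1) - a j) \<le> 15 * real n + 30" for j
  proof -
    have "norm (a j) \<le> 1"
      using assms(2)[of j] order_trans by fastforce
    moreover have "norm (Spow zs (j + 1)) \<le> 2 * n + 1"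
      using norm_power_sum_unimodular_le[of zs "j + 1"] circle assms(3) by (simp add: Spow_def)
    ultimately show ?thesis
      using norm_triangle_ineq4[of "Spow zs (j + 1)" "a j"] by simp
  qed
  have "norm (Spow zs (j + 1) - a j)
          \<le> r powr (real n - real j) / (1 - r ^ (n + 1)) * (15 * real n + 30 / (1 - r))"
    if "n \<le> j" "0 < r" "r < 1" for j r
    using order_trans[OF bound error_bound_ge_15n_plus_30[OF that]] .
  with power_sums show ?thesis
    by simp
qed

end
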